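(* Suppose that a string $S$ with $|S| \le |Q_k|+4\tau$ contains $Q_k$ as a substring. Then (a) replacing any occurrence of $Q_k$ in $S$ with $Q_k'$ results in $r_k(S)$; (b) replacing any occurrence of $Q'_k$ in $r_k(S)$ with $Q_k$ results in $S$.
   Context: For a string $S$, $S[1..p]$ is a period of $S$ if $S[i]=S[i+p]$ for $1\le i\le |S|-p$, and $\mathrm{per}(S)$ denotes the length of the shortest period of $S$. Let $\tau\ge1$ and $\ell>10\tau$ be integers, $S_k$ a string of length at least $\ell$, and $Q_k = S_k[1+2\tau..\ell]$, so $|Q_k|=\ell-2\tau\ge 8\tau$. Let $\rho=Q_k[1..\mathrm{per}(Q_k)]$. If $\mathrm{per}(Q_k) > 4\tau$, define $Q_k' = \#$, where $\#$ is a special letter not in the main alphabet. Otherwise write $Q_k=\rho^t\rho'$ with $\rho'$ a prefix of $\rho$, and set $Q_k'=\rho^{t'}\rho'$ for some $t'\le t$ chosen so that $8\tau\le |Q_k'|<12\tau$. For any string $S$, define $r_k(S)=\varepsilon$ (the empty string) if $S$ does not contain $Q_k$, and otherwise $r_k(S)$ is the string obtained from $S$ by replacing the first occurrence of $Q_k$ with $Q'_k$. *)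

theory Defs
  imports Main
begin

(* Strings are lists, 0-indexed. p is a period of S (paper: S[1..p] is a period). *)
definition is_period :: "'a list \<Rightarrow> nat \<Rightarrow> bool" where
  "is_period S p \<longleftrightarrow> 0 < p \<and> p \<le> length S \<and>
     (\<forall>i. i + p < length S \<longrightarrow> S ! i = S ! (i + p))"

definition per :: "'a list \<Rightarrow> nat" where
  "per S = (LEAST p. is_period S p)"

definition occ_at :: "'a list \<Rightarrow> 'a list \<Rightarrow> nat \<Rightarrow> bool" where
  "occ_at Q S i \<longleftrightarrow> i + length Q \<le> length S \<and> take (length Q) (drop i S) = Q"

(* Q_k = S_k[1+2tau..l] *)
definition Qk :: "nat \<Rightarrow> nat \<Rightarrow> 'a list \<Rightarrow> 'a list" where
  "Qk tau l Sk = take (l - 2 * tau) (drop (2 * tau) Sk)"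

(* Q' is an admissible choice of Q'_k for Q (hash is the special letter #) *)
definition valid_Q' :: "'a \<Rightarrow> nat \<Rightarrow> 'a list \<Rightarrow> 'a list \<Rightarrow> bool" where
  "valid_Q' hash tau Q Q' \<longleftrightarrow>
     (per Q > 4 * tau \<and> Q' = [hash]) \<or>
     (per Q \<le> 4 * tau \<and>
      (\<exists>t t' \<rho>'. Q = concat (replicate t (take (per Q) Q)) @ \<rho>' \<and>
                 (\<exists>w. \<rho>' @ w = take (per Q) Q) \<and> t' \<le> t \<and>
                 Q' = concat (replicate t' (take (per Q) Q)) @ \<rho>' \<and>
                 8 * tau \<le> length Q' \<and> length Q' < 12 * tau))"

(* r_k(S): replace the first occurrence of Q by Q'; empty string if none *)
definition rk :: "'a list \<Rightarrow> 'a list \<Rightarrow> 'a list \<Rightarrow> 'a list" where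
  "rk Q Q' S = (if \<exists>i. occ_at Q S i
     then (let i = (LEAST i. occ_at Q S i) in take i S @ Q' @ drop (i + length Q) S)
     else [])"

end

theory Submission
  imports Defs
begin

text \<open>
  Write \<open>S = A Q B\<close> for the first occurrence, so \<open>|A| + |B| \<le> 4\<tau>\<close>. Any other occurrence
  \<open>S = u Q v\<close> differs from it by a shift \<open>C\<close> with \<open>|C| \<le> 4\<tau> < |Q|\<close>, and \<open>|C|\<close> is then a
  period of \<open>Q\<close>. If \<open>per Q > 4\<tau>\<close> this forces \<open>C = \<epsilon>\<close>, and the letter \<open>#\<close> occurs only once in
  \<open>r\<^sub>k(S)\<close>. Otherwise, with \<open>p = per Q\<close> and \<open>\<rho> = Q[1..p]\<close>, the weak Fine--Wilf theorem shows
  that \<open>p\<close> divides \<open>|C|\<close>, so \<open>C = \<rho>\<^sup>c\<close>; the same holds for \<open>Q'\<close>, which has the same shortest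
  period. Since \<open>Q = \<rho>\<^sup>e Q'\<close> and powers of \<open>\<rho>\<close> commute, \<open>C\<close> is a shift between two
  occurrences of \<open>Q\<close> exactly when it is one between the corresponding occurrences of \<open>Q'\<close>.
\<close>

lemma is_period_nth_mod:
  assumes "is_period w p" "i < length w"
  shows "w ! i = w ! (i mod p)"
  using assms(2)
proof (induction i rule: less_induct)
  case (less i)
  show ?case
  proof (cases "i < p")
    case False
    have "w ! (i - p) = w ! (i - p + p)"
      using assms(1) less.prems False unfolding is_period_def by auto
    moreover have "w ! (i - p) = w ! ((i - p) mod p)"
      using less assms(1) False unfolding is_period_def by auto
    ultimately show ?thesis using False by (simp add: mod_if)
  qed simp
qed

lemma is_period_take:
  "is_period w p \<Longrightarrow> p \<le> n \<Longrightarrow> n \<le> length w \<Longrightarrow> is_period (take n w) p"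
  unfolding is_period_def by auto

lemma is_period_diff:
  assumes "is_period w p" "is_period w q" "p < q" "p + q \<le> length w"
  shows "is_period w (q - p)"
  unfolding is_period_def
proof (intro conjI allI impI)
  show "0 < q - p" "q - p \<le> length w" using assms(3,4) by simp_all
  fix i assume i: "i + (q - p) < length w"
  show "w ! i = w ! (i + (q - p))"
  proof (cases "i + q < length w")
    case True
    then have "w ! i = w ! (i + q)" and "w ! (i + (q - p)) = w ! (i + (q - p) + p)"
      using assms(1-3) unfolding is_period_def by auto
    then show ?thesis using assms(3) by (simp add: algebra_simps)
  next
    case False
    then have "p \<le> i" using assms(4) by simp
    have "w ! (i - p) = w ! (i - p + p)"
      using assms(1) i \<open>p \<le> i\<close> unfolding is_period_def by simp
    moreover have "w ! (i - p) = w ! (i - p + q)"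
      using assms(2,3) i \<open>p \<le> i\<close> unfolding is_period_def by simp
    ultimately show ?thesis using \<open>p \<le> i\<close> assms(3) by (simp add: algebra_simps)
  qed
qed

lemma is_period_gcd:
  "is_period w p \<Longrightarrow> is_period w q \<Longrightarrow> p + q \<le> length w \<Longrightarrow> is_period w (gcd p q)"
proof (induction "p + q" arbitrary: p q rule: less_induct)
  case less
  have pos: "0 < p" "0 < q" using less.prems unfolding is_period_def by auto
  show ?case
  proof (cases p q rule: linorder_cases)
    case less': less
    have "is_period w (q - p)" using is_period_diff less.prems less' by blast
    then have "is_period w (gcd p (q - p))"
      using less.hyps[of p "q - p"] less.prems less' pos by simp
    then show ?thesis using less' by (metis gcd.commute gcd_diff1_nat less_imp_le_nat)
  next
    case greater
    have "is_period w (p - q)" using is_period_diff[of w q p] less.prems greater by simp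
    then have "is_period w (gcd (p - q) q)"
      using less.hyps[of "p - q" q] less.prems greater pos by simp
    then show ?thesis using greater by (simp add: gcd_diff1_nat)
  qed (use less.prems in simp)
qed

lemma is_period_extend:
  assumes p: "is_period w p" and "d dvd p" and d: "is_period (take p w) d"
  shows "is_period w d"
proof -
  have "0 < d" "d \<le> p" "p \<le> length w"
    using p d unfolding is_period_def by auto
  have nth_mod_d: "w ! i = w ! (i mod d)" if "i < length w" for i
  proof -
    have "i mod d < d" using \<open>0 < d\<close> by simp
    then have "i mod d < p" "i mod p < p" using \<open>d \<le> p\<close> by simp_all
    have "w ! i = take p w ! (i mod p)"
      using is_period_nth_mod[OF p that] \<open>i mod p < p\<close> by simp
    also have "\<dots> = take p w ! (i mod p mod d)"
      using is_period_nth_mod[OF d] \<open>i mod p < p\<close> \<open>p \<le> length w\<close> by simp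
    also have "\<dots> = w ! (i mod d)"
      using \<open>d dvd p\<close> \<open>i mod d < p\<close> by (simp add: mod_mod_cancel)
    finally show ?thesis .
  qed
  show ?thesis
    unfolding is_period_def
    using \<open>0 < d\<close> \<open>d \<le> p\<close> \<open>p \<le> length w\<close> nth_mod_d by auto
qed

lemma per_is_period: "w \<noteq> [] \<Longrightarrow> is_period w (per w)"
  unfolding per_def by (rule LeastI[of _ "length w"]) (simp add: is_period_def)

lemma per_le: "is_period w q \<Longrightarrow> per w \<le> q"
  unfolding per_def by (rule Least_le)

lemma per_dvd_period:
  assumes "is_period w q" "q + per w \<le> length w"
  shows "per w dvd q"
proof -
  have "w \<noteq> []" using assms(1) unfolding is_period_def by auto
  then have "is_period w (gcd (per w) q)"
    using is_period_gcd[OF per_is_period[OF \<open>w \<noteq> []\<close>] assms(1)] assms(2) by (simp add: add.commute)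
  then have "per w \<le> gcd (per w) q" by (rule per_le)
  moreover have "gcd (per w) q \<le> per w"
    using per_is_period[OF \<open>w \<noteq> []\<close>] unfolding is_period_def by (simp add: gcd_le1_nat)
  ultimately show ?thesis by (metis antisym gcd_dvd2)
qed

lemma per_take:
  assumes "w \<noteq> []" "2 * per w \<le> n" "n \<le> length w"
  shows "per (take n w) = per w"
proof (rule antisym)
  let ?p = "per w" and ?v = "take n w"
  have p: "is_period w ?p" using assms(1) by (rule per_is_period)
  then have "0 < ?p" unfolding is_period_def by simp
  have "is_period ?v ?p" using is_period_take[OF p _ assms(3)] assms(2) by simp
  then show "per ?v \<le> ?p" by (rule per_le)
  then have q: "is_period ?v (per ?v)"
    using \<open>0 < ?p\<close> assms(2,3) by (intro per_is_period) auto
  have "is_period ?v (gcd (per ?v) ?p)"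
    using is_period_gcd[OF q \<open>is_period ?v ?p\<close>] \<open>per ?v \<le> ?p\<close> assms(2,3) by simp
  moreover have "gcd (per ?v) ?p \<le> ?p" using \<open>0 < ?p\<close> by (simp add: gcd_le2_nat)
  ultimately have "is_period (take ?p ?v) (gcd (per ?v) ?p)"
    using is_period_take[of ?v] assms(2,3) by simp
  then have "is_period (take ?p w) (gcd (per ?v) ?p)" using assms(2) by (simp add: min_def)
  then have "is_period w (gcd (per ?v) ?p)"
    using is_period_extend[OF p] by simp
  then have "?p \<le> gcd (per ?v) ?p" by (rule per_le)
  also have "\<dots> \<le> per ?v"
    using q unfolding is_period_def by (simp add: gcd_le1_nat)
  finally show "?p \<le> per ?v" .
qed

lemma power_append_commute:
  "concat (replicate c R) @ concat (replicate e R) = concat (replicate e R) @ concat (replicate c R)"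
  by (metis add.commute concat_append replicate_add)

lemma take_mult_period:
  assumes "is_period w p" "c * p \<le> length w"
  shows "take (c * p) w = concat (replicate c (take p w))"
  using assms(2)
proof (induction c)
  case (Suc c)
  have block: "take p (drop (c * p) w) = take p w"
  proof (rule nth_equalityI)
    show "length (take p (drop (c * p) w)) = length (take p w)" using Suc.prems by simp
    fix i assume "i < length (take p (drop (c * p) w))"
    then have i: "i < p" "c * p + i < length w" by auto
    have "w ! (c * p + i) = w ! ((c * p + i) mod p)" by (rule is_period_nth_mod[OF assms(1) i(2)])
    also have "\<dots> = w ! i" using i(1) by simp
    finally show "take p (drop (c * p) w) ! i = take p w ! i" using i by simp
  qed
  have "take (Suc c * p) w = take (c * p) w @ take p (drop (c * p) w)"
    unfolding mult_Suc add.commute[of p] by (rule take_add)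
  also have "\<dots> = concat (replicate c (take p w)) @ take p w"
    using Suc block by simp
  also have "\<dots> = concat (replicate (Suc c) (take p w))"
    using power_append_commute[of c "take p w" 1] by simp
  finally show ?case .
qed simp

lemma is_period_shift:
  assumes "W @ B = C @ W @ B'" "C \<noteq> []" "length C \<le> length W"
  shows "is_period W (length C)"
  unfolding is_period_def
proof (intro conjI allI impI)
  fix i assume i: "i + length C < length W"
  have "(W @ B) ! (i + length C) = (C @ W @ B') ! (i + length C)" using assms(1) by simp
  then show "W ! i = W ! (i + length C)" using i by (simp add: nth_append)
qed (use assms(2,3) in auto)

lemma shift_eq_power_per:
  assumes "W @ B = C @ W @ B'" "length C + per W \<le> length W"
  shows "C = concat (replicate (length C div per W) (take (per W) W))"
proof (cases "C = []")
  case False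
  have "C = take (length C) W" using arg_cong[OF assms(1), of "take (length C)"] assms(2) by simp
  moreover have "per W dvd length C"
    using is_period_shift[OF assms(1) False] assms(2) by (intro per_dvd_period) auto
  moreover have "is_period W (per W)" using False assms(2) by (intro per_is_period) auto
  ultimately show ?thesis
    using take_mult_period[of W "per W" "length C div per W"] assms(2) by simp
qed simp

lemma shift_iff_of_power_prefix:
  assumes R: "take (per Q) Q = R" and Q: "Q = concat (replicate e R) @ Q'"
    and prefix: "take (length Q') Q = Q'" and "Q \<noteq> []"
    and "2 * per Q \<le> length Q'" and "length C + per Q \<le> length Q'"
  shows "Q @ B = C @ Q @ B' \<longleftrightarrow> Q' @ B = C @ Q' @ B'"
proof -
  have "length Q' \<le> length Q" using arg_cong[OF Q, of length] by simp
  then have "per Q' = per Q" using per_take[of Q "length Q'"] assms(4,5) prefix by simp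
  moreover have "take (per Q) Q' = R"
    using prefix R assms(5) by (metis min.absorb1 mult_2 le_add1 order_trans take_take)
  moreover have "length C + per Q \<le> length Q" using assms(6) \<open>length Q' \<le> length Q\<close> by simp
  ultimately have C_power: "C = concat (replicate (length C div per Q) R)"
    if "Q @ B = C @ Q @ B' \<or> Q' @ B = C @ Q' @ B'"
    using that shift_eq_power_per[of Q B C B'] shift_eq_power_per[of Q' B C B'] R assms(6)
    by auto
  have commute: "concat (replicate e R) @ C = C @ concat (replicate e R)"
    if "C = concat (replicate c R)" for c
    using that power_append_commute by metis
  show ?thesis
  proof
    assume "Q @ B = C @ Q @ B'"
    then have "concat (replicate e R) @ Q' @ B = concat (replicate e R) @ C @ Q' @ B'"
      using commute C_power by (metis Q append.assoc)
    then show "Q' @ B = C @ Q' @ B'" by simp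
  next
    assume "Q' @ B = C @ Q' @ B'"
    then show "Q @ B = C @ Q @ B'"
      using commute C_power by (metis Q append.assoc)
  qed
qed

definition replaces_uniquely :: "'a list \<Rightarrow> 'a list \<Rightarrow> 'a list \<Rightarrow> 'a list \<Rightarrow> bool" where
  "replaces_uniquely W W' A B \<longleftrightarrow> (\<forall>u v. A @ W @ B = u @ W @ v \<longrightarrow> u @ W' @ v = A @ W' @ B)"

lemma replaces_uniquely_if_shifts_transfer:
  assumes shift: "\<And>C B B'. length C \<le> b \<Longrightarrow> W @ B = C @ W @ B' \<Longrightarrow> W' @ B = C @ W' @ B'"
    and "length A + length B \<le> b"
  shows "replaces_uniquely W W' A B"
  unfolding replaces_uniquely_def
proof (intro allI impI)
  fix u v assume S: "A @ W @ B = u @ W @ v"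
  have "length u + length v = length A + length B" using arg_cong[OF S, of length] by simp
  then have "length A \<le> b" "length u \<le> b" using assms(2) by simp_all
  show "u @ W' @ v = A @ W' @ B"
  proof (cases "length A \<le> length u")
    case True
    then obtain C where "u = A @ C" using S by (metis append_eq_append_conv_if append_take_drop_id)
    then show ?thesis using S shift[of C B v] \<open>length u \<le> b\<close> by simp
  next
    case False
    then obtain C where "A = u @ C" using S
      by (metis append_eq_append_conv_if append_take_drop_id nat_le_linear)
    then show ?thesis using S shift[of C v B] \<open>length A \<le> b\<close> by simp
  qed
qed

lemma occurrence_of_unique_letter:
  assumes "x \<notin> set A" "x \<notin> set B" "A @ x # B = u @ x # v"
  shows "u = A \<and> v = B"
  using assms by (auto simp: append_eq_append_conv2 Cons_eq_append_conv append_eq_Cons_conv)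

lemma rk_first_occurrence:
  assumes "\<exists>i. occ_at Q S i"
  obtains A B where "S = A @ Q @ B" "rk Q Q' S = A @ Q' @ B"
proof -
  define i where "i = (LEAST i. occ_at Q S i)"
  have "occ_at Q S i" unfolding i_def using assms by (rule LeastI_ex)
  then have "S = take i S @ Q @ drop (i + length Q) S"
    unfolding occ_at_def by (metis append_take_drop_id drop_drop add.commute)
  moreover have "rk Q Q' S = take i S @ Q' @ drop (i + length Q) S"
    using assms unfolding rk_def i_def by (simp add: Let_def)
  ultimately show thesis by (rule that)
qed

lemma valid_Q'_periodic:
  assumes "valid_Q' hash tau Q Q'" "per Q \<le> 4 * tau"
  obtains e where "Q = concat (replicate e (take (per Q) Q)) @ Q'"
    "take (length Q') Q = Q'" "8 * tau \<le> length Q'"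
proof -
  define R where "R = take (per Q) Q"
  from assms obtain t t' \<rho>' w where Q: "Q = concat (replicate t R) @ \<rho>'"
    and \<rho>': "\<rho>' @ w = R" and "t' \<le> t" and Q': "Q' = concat (replicate t' R) @ \<rho>'"
    and "8 * tau \<le> length Q'"
    unfolding valid_Q'_def R_def by auto
  define e where "e = t - t'"
  have "concat (replicate t R) = concat (replicate e R) @ concat (replicate t' R)"
    "concat (replicate t R) = concat (replicate t' R) @ concat (replicate e R)"
    using \<open>t' \<le> t\<close> unfolding e_def
    by (metis concat_append le_add_diff_inverse2 le_add_diff_inverse replicate_add)+
  then have "Q = concat (replicate e R) @ Q'"
    and Q_split: "Q = concat (replicate t' R) @ concat (replicate e R) @ \<rho>'"
    unfolding Q Q' by simp_all
  moreover have "take (length \<rho>') (concat (replicate e R) @ \<rho>') = \<rho>'"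
    using \<rho>' by (cases e) (auto dest: sym)
  then have "take (length Q') Q = Q'" unfolding Q_split Q' by simp
  ultimately show thesis using that \<open>8 * tau \<le> length Q'\<close> unfolding R_def by blast
qed

lemma replaces_uniquely_periodic:
  assumes "valid_Q' hash tau Q Q'" "per Q \<le> 4 * tau" "8 * tau < length Q"
    and AB: "length A + length B \<le> 4 * tau"
  shows "replaces_uniquely Q Q' A B \<and> replaces_uniquely Q' Q A B"
proof -
  obtain e where Q: "Q = concat (replicate e (take (per Q) Q)) @ Q'"
    and "take (length Q') Q = Q'" "8 * tau \<le> length Q'"
    using assms(1,2) by (rule valid_Q'_periodic)
  have shift_iff: "Q @ B1 = C @ Q @ B2 \<longleftrightarrow> Q' @ B1 = C @ Q' @ B2"
    if "length C \<le> 4 * tau" for C B1 B2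
    using that assms(2,3) \<open>take (length Q') Q = Q'\<close> \<open>8 * tau \<le> length Q'\<close>
    by (intro shift_iff_of_power_prefix[OF refl Q]) auto
  have "replaces_uniquely Q Q' A B"
    by (rule replaces_uniquely_if_shifts_transfer[OF _ AB]) (use shift_iff in blast)
  moreover have "replaces_uniquely Q' Q A B"
    by (rule replaces_uniquely_if_shifts_transfer[OF _ AB]) (use shift_iff in blast)
  ultimately show ?thesis ..
qed

lemma replaces_uniquely_aperiodic:
  assumes "valid_Q' hash tau Q Q'" "4 * tau < per Q" "8 * tau < length Q"
    and AB: "length A + length B \<le> 4 * tau" and "hash \<notin> set A" "hash \<notin> set B"
  shows "replaces_uniquely Q Q' A B \<and> replaces_uniquely Q' Q A B"
proof
  have Q': "Q' = [hash]" using assms(1,2) unfolding valid_Q'_def by auto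
  have "Q' @ B1 = C @ Q' @ B2" if "length C \<le> 4 * tau" "Q @ B1 = C @ Q @ B2" for C B1 B2
  proof -
    have "C = []" using is_period_shift[OF that(2)] per_le that(1) assms(2,3) by fastforce
    then show ?thesis using that(2) by simp
  qed
  then show "replaces_uniquely Q Q' A B" by (rule replaces_uniquely_if_shifts_transfer[OF _ AB])
  show "replaces_uniquely Q' Q A B"
    unfolding replaces_uniquely_def
  proof (intro allI impI)
    fix u v assume "A @ Q' @ B = u @ Q' @ v"
    then have "u = A \<and> v = B" using occurrence_of_unique_letter assms(5,6) Q' by simp
    then show "u @ Q @ v = A @ Q @ B" by simp
  qed
qed

theorem fact1:
  fixes tau l :: nat and Sk S Q' :: "'a list" and hash :: 'a
  assumes "tau \<ge> 1" and "l > 10 * tau" and "length Sk \<ge> l"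
    and "hash \<notin> set Sk" and "hash \<notin> set S"
    and "valid_Q' hash tau (Qk tau l Sk) Q'"
    and "length S \<le> length (Qk tau l Sk) + 4 * tau"
    and "\<exists>i. occ_at (Qk tau l Sk) S i"
  shows "(\<forall>u v. S = u @ Qk tau l Sk @ v \<longrightarrow> u @ Q' @ v = rk (Qk tau l Sk) Q' S)
       \<and> (\<forall>u v. rk (Qk tau l Sk) Q' S = u @ Q' @ v \<longrightarrow> u @ Qk tau l Sk @ v = S)"
proof -
  define Q where "Q = Qk tau l Sk"
  have valid: "valid_Q' hash tau Q Q'" using assms(6) unfolding Q_def .
  have Q_long: "8 * tau < length Q" using assms(2,3) unfolding Q_def Qk_def by simp
  obtain A B where S: "S = A @ Q @ B" and rk: "rk Q Q' S = A @ Q' @ B"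
    using rk_first_occurrence assms(8) unfolding Q_def by blast
  have AB: "length A + length B \<le> 4 * tau" using assms(7) S unfolding Q_def by simp
  have "replaces_uniquely Q Q' A B \<and> replaces_uniquely Q' Q A B"
  proof (cases "per Q \<le> 4 * tau")
    case True
    with valid Q_long AB show ?thesis by (intro replaces_uniquely_periodic)
  next
    case False
    moreover have "hash \<notin> set A" "hash \<notin> set B" using assms(5) S by auto
    ultimately show ?thesis
      using valid Q_long AB by (intro replaces_uniquely_aperiodic) auto
  qed
  then show ?thesis unfolding replaces_uniquely_def Q_def[symmetric] rk S[symmetric] .
qed

end
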